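(* Let $t$ be an $\mathrm{SL}_2$-tiling, and let $i<j$ and $p<q$ be integers. Then $t_{ip}t_{jq}-t_{iq}t_{jp}=c_{ij}d_{pq}$. In particular this determinant is a positive integer.
   Context: An $\mathrm{SL}_2$-tiling is a map $t:\mathbb{Z}\times\mathbb{Z}\to\{1,2,3,\dots\}$, $(i,j)\mapsto t_{ij}$, with $t_{ij}t_{i+1,j+1}-t_{i,j+1}t_{i+1,j}=1$ for all $i,j$. For integers $i<j$ and any integer $a$ put $c_{ij}=t_{ia}t_{j,a+1}-t_{i,a+1}t_{ja}$ and $d_{ij}=t_{ai}t_{a+1,j}-t_{aj}t_{a+1,i}$; these values do not depend on the choice of $a$ (a known fact about $\mathrm{SL}_2$-tilings). *)

theory Defs
  imports Main
begin

definition SL2_tiling :: "(int \<Rightarrow> int \<Rightarrow> int) \<Rightarrow> bool" where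
  "SL2_tiling t \<longleftrightarrow> (\<forall>i j. t i j \<ge> 1) \<and>
     (\<forall>i j. t i j * t (i+1) (j+1) - t i (j+1) * t (i+1) j = 1)"

text \<open>c_ij and d_ij, computed with the auxiliary index a = 0
  (the values are independent of a for SL2-tilings).\<close>
definition c_coef :: "(int \<Rightarrow> int \<Rightarrow> int) \<Rightarrow> int \<Rightarrow> int \<Rightarrow> int" where
  "c_coef t i j = t i 0 * t j 1 - t i 1 * t j 0"

definition d_coef :: "(int \<Rightarrow> int \<Rightarrow> int) \<Rightarrow> int \<Rightarrow> int \<Rightarrow> int" where
  "d_coef t i j = t 0 i * t 1 j - t 0 j * t 1 i"

end

theory Submission
  imports Defs
begin

text \<open>Positivity: the three-term Pluecker relations show that for an array of positive
  entries positivity of 2\<times>2 minors propagates from adjacent to arbitrary rows and columns,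
  and adjacent minors of an SL2-tiling equal 1.
  Factorization: adjacent rows give the same ratio (t k (a+1) + t k (a-1)) / t k a, so every
  row solves one second-order linear recurrence in the column index and is therefore a
  linear combination of rows 0 and 1; minors of such combinations factor through the
  coefficient determinant.\<close>

definition minor :: "('a \<Rightarrow> 'b \<Rightarrow> 'c::comm_ring) \<Rightarrow> 'a \<Rightarrow> 'a \<Rightarrow> 'b \<Rightarrow> 'b \<Rightarrow> 'c" where
  "minor t i j p q = t i p * t j q - t i q * t j p"

lemma c_coef_eq_minor: "c_coef t i j = minor t i j 0 1"
  unfolding c_coef_def minor_def ..

lemma d_coef_eq_minor: "d_coef t p q = minor t 0 1 p q"
  unfolding d_coef_def minor_def ..

lemma SL2_tiling_pos: "SL2_tiling t \<Longrightarrow> 0 < t i j"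
  unfolding SL2_tiling_def by (metis zero_less_one order_less_le_trans)

lemma SL2_tiling_minor_adjacent: "SL2_tiling t \<Longrightarrow> minor t i (i+1) p (p+1) = 1"
  unfolding SL2_tiling_def minor_def by blast

lemma minor_plucker_rows:
  "minor t i k p q * t j p = t i p * minor t j k p q + t k p * minor t i j p q"
  unfolding minor_def by (simp add: algebra_simps)

lemma minor_plucker_cols:
  "minor t i j p r * t i q = t i p * minor t i j q r + t i r * minor t i j p q"
  unfolding minor_def by (simp add: algebra_simps)

lemma minor_pos_trans_rows:
  fixes t :: "'a \<Rightarrow> 'b \<Rightarrow> 'c::linordered_idom"
  assumes pos: "\<And>i p. 0 < t i p" and "0 < minor t i j p q" "0 < minor t j k p q"
  shows "0 < minor t i k p q"
proof -
  have "0 < minor t i k p q * t j p"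
    unfolding minor_plucker_rows using assms by (simp add: add_pos_pos)
  then show ?thesis using pos[of j p] by (simp add: zero_less_mult_iff)
qed

lemma minor_pos_trans_cols:
  fixes t :: "'a \<Rightarrow> 'b \<Rightarrow> 'c::linordered_idom"
  assumes pos: "\<And>i p. 0 < t i p" and "0 < minor t i j p q" "0 < minor t i j q r"
  shows "0 < minor t i j p r"
proof -
  have "0 < minor t i j p r * t i q"
    unfolding minor_plucker_cols using assms by (simp add: add_pos_pos)
  then show ?thesis using pos[of i q] by (simp add: zero_less_mult_iff)
qed

lemma SL2_tiling_minor_pos:
  assumes T: "SL2_tiling t" and "i < j" and "p < q"
  shows "0 < minor t i j p q"
proof -
  note pos = SL2_tiling_pos[OF T]
  have adjacent_rows: "0 < minor t k (k+1) p q" for k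
    using \<open>p < q\<close>
  proof (induction q rule: int_gr_induct)
    case base
    then show ?case using SL2_tiling_minor_adjacent[OF T] by simp
  next
    case (step q)
    then show ?case
      using minor_pos_trans_cols[where t=t, OF pos] SL2_tiling_minor_adjacent[OF T, of k q]
      by simp
  qed
  show ?thesis
    using \<open>i < j\<close>
  proof (induction j rule: int_gr_induct)
    case base
    then show ?case using adjacent_rows by simp
  next
    case (step j)
    then show ?case using minor_pos_trans_rows[where t=t, OF pos] adjacent_rows[of j] by blast
  qed
qed

lemma recurrence_zero:
  fixes h w s :: "int \<Rightarrow> 'a::idom"
  assumes w: "\<And>p. w p \<noteq> 0"
    and rec: "\<And>p. w p * (h (p+1) + h (p-1)) = s p * h p"
    and "h 0 = 0" "h 1 = 0"
  shows "h n = 0"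
proof -
  have "h n = 0 \<and> h (n+1) = 0"
  proof (induction n rule: int_induct[where k=0])
    case base
    then show ?case using \<open>h 0 = 0\<close> \<open>h 1 = 0\<close> by simp
  next
    case (step1 n)
    then show ?case using rec[of "n+1"] w[of "n+1"] by (simp add: add.commute)
  next
    case (step2 n)
    then show ?case using rec[of n] w[of n] by simp
  qed
  then show ?thesis ..
qed

lemma SL2_tiling_row_ratio_step:
  assumes T: "SL2_tiling t"
  shows "t k a * (t (k+1) (a+1) + t (k+1) (a-1)) = t (k+1) a * (t k (a+1) + t k (a-1))"
proof -
  have "minor t k (k+1) a (a+1) = 1" "minor t k (k+1) (a-1) a = 1"
    using SL2_tiling_minor_adjacent[OF T, of k a] SL2_tiling_minor_adjacent[OF T, of k "a-1"]
    by simp_all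
  then show ?thesis unfolding minor_def by (simp add: algebra_simps)
qed

lemma SL2_tiling_row_ratio:
  assumes T: "SL2_tiling t"
  shows "t 0 a * (t k (a+1) + t k (a-1)) = t k a * (t 0 (a+1) + t 0 (a-1))"
proof -
  define S where "S k = t k (a+1) + t k (a-1)" for k
  have step: "t k a * S (k+1) = t (k+1) a * S k" for k
    unfolding S_def by (rule SL2_tiling_row_ratio_step[OF T])
  have "t 0 a * S k = t k a * S 0"
  proof (induction k rule: int_induct[where k=0])
    case base
    then show ?case by simp
  next
    case (step1 k)
    have "(t 0 a * S (k+1)) * t k a = (t (k+1) a * S 0) * t k a"
      using step[of k] step1 by (metis mult.assoc mult.commute)
    then show ?case using SL2_tiling_pos[OF T, of k a] by simp
  next
    case (step2 k)
    have "(t 0 a * S (k-1)) * t k a = (t (k-1) a * S 0) * t k a"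
      using step[of "k-1"] step2 by (metis diff_add_cancel mult.assoc mult.commute)
    then show ?case using SL2_tiling_pos[OF T, of k a] by simp
  qed
  then show ?thesis unfolding S_def .
qed

lemma SL2_tiling_row_decomp:
  assumes T: "SL2_tiling t"
  shows "t i p = minor t i 1 0 1 * t 0 p + minor t 0 i 0 1 * t 1 p"
proof -
  define g where "g p = t i p - minor t i 1 0 1 * t 0 p - minor t 0 i 0 1 * t 1 p" for p
  have det: "minor t 0 1 0 1 = 1"
    using SL2_tiling_minor_adjacent[OF T, of 0 0] by simp
  have "g 0 = t i 0 * (1 - minor t 0 1 0 1)" "g 1 = t i 1 * (1 - minor t 0 1 0 1)"
    unfolding g_def minor_def by (simp_all add: algebra_simps)
  then have g01: "g 0 = 0" "g 1 = 0" using det by simp_all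
  have rec: "t 0 p * (g (p+1) + g (p-1)) = (t 0 (p+1) + t 0 (p-1)) * g p" for p
  proof -
    define S where "S k = t k (p+1) + t k (p-1)" for k
    have "t 0 p * (g (p+1) + g (p-1))
        = t 0 p * S i - minor t i 1 0 1 * (t 0 p * S 0) - minor t 0 i 0 1 * (t 0 p * S 1)"
      unfolding g_def S_def by (simp add: algebra_simps)
    also have "\<dots>
        = t i p * S 0 - minor t i 1 0 1 * (t 0 p * S 0) - minor t 0 i 0 1 * (t 1 p * S 0)"
      using SL2_tiling_row_ratio[OF T, of p i] SL2_tiling_row_ratio[OF T, of p 1]
      unfolding S_def by simp
    also have "\<dots> = S 0 * g p"
      unfolding g_def by (simp add: algebra_simps)
    finally show ?thesis unfolding S_def .
  qed
  have "g p = 0"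
    by (rule recurrence_zero[where w="t 0", OF _ rec g01])
       (use SL2_tiling_pos[OF T] in \<open>simp add: less_le\<close>)
  then show ?thesis unfolding g_def by simp
qed

lemma minor_row_combinations:
  assumes "\<And>p. t i p = a * t k p + b * t l p" and "\<And>p. t j p = c * t k p + d * t l p"
  shows "minor t i j p q = (a * d - b * c) * minor t k l p q"
  unfolding minor_def assms by (simp add: algebra_simps)

theorem proposition5p7:
  fixes t :: "int \<Rightarrow> int \<Rightarrow> int" and i j p q :: int
  assumes "SL2_tiling t" and "i < j" and "p < q"
  shows "t i p * t j q - t i q * t j p = c_coef t i j * d_coef t p q
         \<and> t i p * t j q - t i q * t j p > 0"
proof -
  define \<Delta> where "\<Delta> = minor t i 1 0 1 * minor t 0 j 0 1 - minor t 0 i 0 1 * minor t j 1 0 1"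
  have factor: "minor t i j p' q' = \<Delta> * minor t 0 1 p' q'" for p' q'
    unfolding \<Delta>_def
    by (rule minor_row_combinations) (rule SL2_tiling_row_decomp[OF assms(1)])+
  have "c_coef t i j = \<Delta>"
    using factor[of 0 1] SL2_tiling_minor_adjacent[OF assms(1), of 0 0]
    by (simp add: c_coef_eq_minor)
  then have "minor t i j p q = c_coef t i j * d_coef t p q"
    using factor by (simp add: d_coef_eq_minor)
  moreover have "0 < minor t i j p q"
    using SL2_tiling_minor_pos[OF assms] .
  ultimately show ?thesis unfolding minor_def by simp
qed

end
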